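(* Let $M$ be a matching of size $k$ and let $N$ be a matching of size $k+2$ having a separated pair $K$ such that $N-K$ equals $M$ up to cyclic relabeling. Then the connected component of $N$ in $\mathbf{DCM}_{k+2}$ has at least as many vertices as the connected component of $M$ in $\mathbf{DCM}_k$.
   Context: Let $k\ge 1$ and let $X_{2k}=\{P_1,\dots,P_{2k}\}$ be $2k$ points in convex position in the plane, labeled in clockwise cyclic order; indices are taken modulo $2k$. A matching of $X_{2k}$ means a set of $k$ pairwise non-crossing straight segments (edges) with endpoints in $X_{2k}$ covering every point exactly once; its size is $k$. Two matchings $M,M'$ of $X_{2k}$ are disjoint compatible if they have no common edge and no edge of $M$ crosses an edge of $M'$. $\mathbf{DCM}_k$ is the graph whose vertices are the matchings of $X_{2k}$, two being adjacent iff they are disjoint compatible. A block of a matching $M$ is a pair of edges $\{P_iP_{i+3},P_{i+1}P_{i+2}\}\subseteq M$; an antiblock is a pair of edges $\{P_iP_{i+1},P_{i+2}P_{i+3}\}\subseteq M$; a separated pair is a block or an antiblock. If $K$ is a separated pair of a matching $N$ of size $k+2$, then $N-K$ denotes the set $N\setminus K$, regarded as a matching of the remaining $2k$ points (which are in convex position) with their inherited cyclic order, i.e. as a matching of size $k$ defined up to cyclic relabeling. *)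

theory Defs
  imports Main
begin

text \<open>Points P_1..P_n in convex position, clockwise, are labelled 0..n-1.
  An edge is a two-element set of labels. For points in convex position two
  segments cross iff their endpoints interleave in the cyclic order.\<close>

definition crosses :: "nat set \<Rightarrow> nat set \<Rightarrow> bool" where
  "crosses e f \<longleftrightarrow>
     (\<exists>a b c d. e = {a, b} \<and> f = {c, d} \<and> a < c \<and> c < b \<and> b < d) \<or>
     (\<exists>a b c d. f = {a, b} \<and> e = {c, d} \<and> a < c \<and> c < b \<and> b < d)"

definition is_matching :: "nat \<Rightarrow> nat set set \<Rightarrow> bool" where
  "is_matching n M \<longleftrightarrow>
     (\<forall>e\<in>M. \<exists>a b. e = {a, b} \<and> a \<noteq> b \<and> a < n \<and> b < n) \<and>
     (\<forall>x<n. \<exists>!e. e \<in> M \<and> x \<in> e) \<and>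
     (\<forall>e\<in>M. \<forall>f\<in>M. \<not> crosses e f)"

text \<open>Adjacency in DCM: disjoint compatible matchings.\<close>
definition dcm_adj :: "nat \<Rightarrow> nat set set \<Rightarrow> nat set set \<Rightarrow> bool" where
  "dcm_adj n M M' \<longleftrightarrow> is_matching n M \<and> is_matching n M' \<and> M \<inter> M' = {} \<and>
     (\<forall>e\<in>M. \<forall>f\<in>M'. \<not> crosses e f)"

definition dcm_component :: "nat \<Rightarrow> nat set set \<Rightarrow> nat set set set" where
  "dcm_component n M = {M'. (dcm_adj n)\<^sup>*\<^sup>* M M'}"

definition block_at :: "nat \<Rightarrow> nat \<Rightarrow> nat set set" where
  "block_at n i = {{i mod n, (i + 3) mod n}, {(i + 1) mod n, (i + 2) mod n}}"

definition antiblock_at :: "nat \<Rightarrow> nat \<Rightarrow> nat set set" where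
  "antiblock_at n i = {{i mod n, (i + 1) mod n}, {(i + 2) mod n, (i + 3) mod n}}"

definition separated_pair :: "nat \<Rightarrow> nat set set \<Rightarrow> nat set set \<Rightarrow> bool" where
  "separated_pair n N K \<longleftrightarrow> (\<exists>i<n. (K = block_at n i \<or> K = antiblock_at n i) \<and> K \<subseteq> N)"

text \<open>N - K for a separated pair occupying points i,...,i+3: the remaining n-4 points
  are relabelled 0..n-5 in their inherited cyclic order, starting from point i+4.\<close>
definition remove_at :: "nat \<Rightarrow> nat set set \<Rightarrow> nat \<Rightarrow> nat set set" where
  "remove_at n N i = {{j, l} | j l. j < n - 4 \<and> l < n - 4 \<and>
       {(i + 4 + j) mod n, (i + 4 + l) mod n} \<in> N}"

definition rotate_matching :: "nat \<Rightarrow> nat \<Rightarrow> nat set set \<Rightarrow> nat set set" where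
  "rotate_matching m r M = (\<lambda>e. (\<lambda>x. (x + r) mod m) ` e) ` M"

end

theory Submission
  imports Defs
begin

(* Let N - K = M up to the relabelling r, where K is the block or the antiblock on
   the consecutive points i, ..., i+3 of the 2k+4 points.  The points other than i..i+3 carry M
   via a relabelling h that preserves crossings (a rotation, a shift and a rotation).  Any matching
   X of the 2k points gives the matching h(X) + B or h(X) + A of the 2k+4 points, where B and A are
   the block and the antiblock at i.  B and A are disjoint and do not cross each other nor any chord
   between image points, so an edge X -- Y of DCM_k yields edges h(X) + B -- h(Y) + A and
   h(X) + A -- h(Y) + B of DCM_{k+2}.  Since N = h(M) + K, walking along the component of M
   gives for every member X a completion of h(X) in the component of N, and completions of
   different X differ. *)

(* For points in convex position, two chords cross iff their endpoints interleave; the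
   combinatorial form below is symmetric in each chord and easy to transport. *)
definition interleaved :: "nat \<Rightarrow> nat \<Rightarrow> nat \<Rightarrow> nat \<Rightarrow> bool" where
  "interleaved a b c d \<longleftrightarrow> a \<noteq> b \<and> a \<noteq> c \<and> a \<noteq> d \<and> b \<noteq> c \<and> b \<noteq> d \<and> c \<noteq> d \<and>
     ((min a b < c \<and> c < max a b) \<noteq> (min a b < d \<and> d < max a b))"

lemma crosses_sym: "crosses e f \<Longrightarrow> crosses f e"
  unfolding crosses_def by blast

lemma crosses_imp_interleaved: "crosses {a, b} {c, d} \<Longrightarrow> interleaved a b c d"
  unfolding crosses_def interleaved_def doubleton_eq_iff
  by (elim disjE exE conjE) (simp_all add: min_def max_def)

lemma interleaved_imp_crosses:
  assumes "interleaved a b c d" shows "crosses {a, b} {c, d}"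
proof -
  have basic: "crosses {x, y} {z, w}" if "x < z" "z < y" "y < w" for x y z w
    using that unfolding crosses_def by blast
  have ordered: "crosses {x, y} {z, w}" if "x < y" "interleaved x y z w" for x y z w
  proof (cases "x < z \<and> z < y")
    case True
    then have "w < x \<or> y < w" using that unfolding interleaved_def by auto
    then show ?thesis
      using True basic[of x z y w] basic[of w x z y] crosses_sym by (metis insert_commute)
  next
    case False
    then have "x < w" "w < y" "z < x \<or> y < z" using that unfolding interleaved_def by auto
    then show ?thesis
      using basic[of x w y z] basic[of z x w y] crosses_sym by (metis insert_commute)
  qed
  show ?thesis
  proof (cases "a < b")
    case True then show ?thesis using ordered assms by blast
  next
    case False
    then have "b < a" "interleaved b a c d" using assms unfolding interleaved_def by auto
    then show ?thesis using ordered by (metis insert_commute)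
  qed
qed

lemma crosses_iff_interleaved: "crosses {a, b} {c, d} \<longleftrightarrow> interleaved a b c d"
  using crosses_imp_interleaved interleaved_imp_crosses by blast

lemma interleaved_shift: "interleaved (a + s) (b + s) (c + s) (d + s) \<longleftrightarrow> interleaved a b c d"
  unfolding interleaved_def min_def max_def by auto

lemma interleaved_apart:
  "p < 4 \<Longrightarrow> q < 4 \<Longrightarrow> 4 \<le> x \<Longrightarrow> 4 \<le> y \<Longrightarrow> \<not> interleaved p q x y"
  unfolding interleaved_def min_def max_def by auto

definition rot :: "nat \<Rightarrow> nat \<Rightarrow> nat \<Rightarrow> nat" where
  "rot n t x = (x + t) mod n"

lemma rot_less: "0 < n \<Longrightarrow> rot n t x < n"
  unfolding rot_def by simp

lemma rot_Suc: "rot n (Suc t) x = rot n 1 (rot n t x)"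
  unfolding rot_def by (simp add: mod_Suc_eq)

lemma rot_one: "a < n \<Longrightarrow> rot n 1 a = (if a + 1 = n then 0 else a + 1)"
  unfolding rot_def by auto

lemma rot_inverse:
  assumes "x < n" shows "rot n (n - t mod n) (rot n t x) = x" "rot n t (rot n (n - t mod n) x) = x"
proof -
  have n: "0 < n" using assms by simp
  have "(x + (t mod n + (n - t mod n))) mod n = x"
    using assms n by (simp add: less_imp_le)
  then show "rot n (n - t mod n) (rot n t x) = x" "rot n t (rot n (n - t mod n) x) = x"
    unfolding rot_def by (metis add.assoc add.commute mod_add_left_eq mod_add_right_eq)+
qed

lemma inj_on_rot: "inj_on (rot n t) {..<n}"
  by (rule inj_onI) (metis lessThan_iff rot_inverse(1))

lemma rot_image: "rot n t ` {..<n} = {..<n}"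
proof
  show "rot n t ` {..<n} \<subseteq> {..<n}" using rot_less by fastforce
  show "{..<n} \<subseteq> rot n t ` {..<n}"
    using rot_inverse(2) rot_less by (metis image_eqI lessThan_iff subsetI zero_less_iff_neq_zero less_nat_zero_code)
qed

lemma rot_image_split:
  assumes "4 \<le> n" shows "rot n i ` {..<n} = rot n i ` {..<4} \<union> rot n i ` {4..<n}"
proof -
  have "{..<n} = {..<4} \<union> {4..<n}" using assms by auto
  then show ?thesis by (metis image_Un)
qed

lemma interleaved_rot_one:
  assumes "a < n" "b < n" "c < n" "d < n"
  shows "interleaved (rot n 1 a) (rot n 1 b) (rot n 1 c) (rot n 1 d) \<longleftrightarrow> interleaved a b c d"
  unfolding rot_one[OF assms(1)] rot_one[OF assms(2)] rot_one[OF assms(3)] rot_one[OF assms(4)]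
  using assms unfolding interleaved_def min_def max_def by (auto split: if_splits)

lemma interleaved_rot:
  assumes "a < n" "b < n" "c < n" "d < n"
  shows "interleaved (rot n t a) (rot n t b) (rot n t c) (rot n t d) \<longleftrightarrow> interleaved a b c d"
proof (induction t)
  case 0 then show ?case using assms by (simp add: rot_def)
next
  case (Suc t)
  have "0 < n" using assms by simp
  then show ?case unfolding rot_Suc using interleaved_rot_one rot_less Suc by simp
qed

lemma crosses_rot:
  assumes "a < n" "b < n" "c < n" "d < n"
  shows "crosses {rot n t a, rot n t b} {rot n t c, rot n t d} \<longleftrightarrow> interleaved a b c d"
  by (simp only: crosses_iff_interleaved interleaved_rot[OF assms])

(* An injective relabelling of m points into n points that preserves and reflects crossings:
   it transports matchings of the m points to partial matchings of the n points. *)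
definition crossing_embedding :: "nat \<Rightarrow> nat \<Rightarrow> (nat \<Rightarrow> nat) \<Rightarrow> bool" where
  "crossing_embedding m n h \<longleftrightarrow> inj_on h {..<m} \<and> h ` {..<m} \<subseteq> {..<n} \<and>
     (\<forall>a<m. \<forall>b<m. \<forall>c<m. \<forall>d<m. crosses {h a, h b} {h c, h d} \<longleftrightarrow> crosses {a, b} {c, d})"

lemma crossing_embedding_crosses:
  "crossing_embedding m n h \<Longrightarrow> a < m \<Longrightarrow> b < m \<Longrightarrow> c < m \<Longrightarrow> d < m \<Longrightarrow>
     crosses {h a, h b} {h c, h d} \<longleftrightarrow> crosses {a, b} {c, d}"
  unfolding crossing_embedding_def by simp

lemma crossing_embedding_rot: "crossing_embedding n n (rot n t)"
  unfolding crossing_embedding_def crosses_iff_interleaved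
  using inj_on_rot rot_image interleaved_rot by simp

lemma crossing_embedding_shift: "crossing_embedding m (m + s) (\<lambda>a. a + s)"
  unfolding crossing_embedding_def
  by (auto simp: crosses_iff_interleaved interleaved_shift)

lemma crossing_embedding_comp:
  assumes h: "crossing_embedding m n h" and g: "crossing_embedding n p g"
  shows "crossing_embedding m p (g \<circ> h)"
proof -
  have into: "h ` {..<m} \<subseteq> {..<n}" and inj_h: "inj_on h {..<m}"
    using h unfolding crossing_embedding_def by simp_all
  have "inj_on g {..<n}" "g ` {..<n} \<subseteq> {..<p}" using g unfolding crossing_embedding_def by simp_all
  then have "inj_on (g \<circ> h) {..<m}" "(g \<circ> h) ` {..<m} \<subseteq> {..<p}"
    using into inj_h by (auto intro: comp_inj_on inj_on_subset)
  moreover have "crosses {g (h a), g (h b)} {g (h c), g (h d)} \<longleftrightarrow> crosses {a, b} {c, d}"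
    if "a < m" "b < m" "c < m" "d < m" for a b c d
  proof -
    have "h a < n" "h b < n" "h c < n" "h d < n" using that into by auto
    then show ?thesis using that crossing_embedding_crosses[OF h] crossing_embedding_crosses[OF g] by simp
  qed
  ultimately show ?thesis unfolding crossing_embedding_def by simp
qed

lemma crossing_embedding_mono:
  "crossing_embedding m n h \<Longrightarrow> l \<le> m \<Longrightarrow> crossing_embedding l n h"
proof -
  assume h: "crossing_embedding m n h" and l: "l \<le> m"
  then have sub: "{..<l} \<subseteq> {..<m}" by auto
  then show ?thesis
    using h inj_on_subset[OF _ sub] image_mono[OF sub] l unfolding crossing_embedding_def
    by (meson order_trans less_le_trans)
qed

definition compatible :: "nat set set \<Rightarrow> nat set set \<Rightarrow> bool" where
  "compatible X Y \<longleftrightarrow> (\<forall>e\<in>X. \<forall>f\<in>Y. \<not> crosses e f)"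

lemma compatible_sym: "compatible X Y \<Longrightarrow> compatible Y X"
  unfolding compatible_def using crosses_sym by blast

lemma compatible_Un [simp]:
  "compatible (A \<union> B) C \<longleftrightarrow> compatible A C \<and> compatible B C"
  "compatible C (A \<union> B) \<longleftrightarrow> compatible C A \<and> compatible C B"
  unfolding compatible_def by blast+

lemma is_matching_iff:
  "is_matching n X \<longleftrightarrow>
     (\<forall>e\<in>X. \<exists>a b. e = {a, b} \<and> a \<noteq> b \<and> a < n \<and> b < n) \<and>
     (\<forall>x<n. \<exists>!e. e \<in> X \<and> x \<in> e) \<and> compatible X X"
  unfolding is_matching_def compatible_def ..

lemma dcm_adj_iff:
  "dcm_adj n X Y \<longleftrightarrow> is_matching n X \<and> is_matching n Y \<and> X \<inter> Y = {} \<and> compatible X Y"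
  unfolding dcm_adj_def compatible_def ..

lemma matching_edge:
  "is_matching n X \<Longrightarrow> e \<in> X \<Longrightarrow> \<exists>a b. e = {a, b} \<and> a \<noteq> b \<and> a < n \<and> b < n"
  unfolding is_matching_def by blast

lemma matching_cover: "is_matching n X \<Longrightarrow> x < n \<Longrightarrow> \<exists>!e. e \<in> X \<and> x \<in> e"
  unfolding is_matching_def by blast

lemma matching_edge_subset: "is_matching n X \<Longrightarrow> e \<in> X \<Longrightarrow> e \<subseteq> {..<n}"
  using matching_edge by fastforce

lemma matching_of_two_edges:
  assumes "distinct [p, q, s, t]" "{p, q, s, t} = {..<n}" "\<not> interleaved p q s t"
  shows "is_matching n {{p, q}, {s, t}}"
proof -
  have "\<exists>!e. e \<in> {{p, q}, {s, t}} \<and> x \<in> e" if "x < n" for x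
  proof -
    have "x \<in> {p, q} \<and> x \<notin> {s, t} \<or> x \<in> {s, t} \<and> x \<notin> {p, q}"
      using that assms(1,2) by auto
    then show ?thesis by auto
  qed
  moreover have "\<not> crosses e f" if "e \<in> {{p, q}, {s, t}}" "f \<in> {{p, q}, {s, t}}" for e f
    using that assms(1,3) by (auto simp: crosses_iff_interleaved interleaved_def)
  moreover have "p < n" "q < n" "s < n" "t < n" using assms(2) by blast+
  ultimately show ?thesis using assms(1) unfolding is_matching_def by auto
qed

definition lift :: "(nat \<Rightarrow> nat) \<Rightarrow> nat set set \<Rightarrow> nat set set" where
  "lift h X = (\<lambda>e. h ` e) ` X"

lemma lift_comp: "lift g (lift f X) = lift (g \<circ> f) X"
  unfolding lift_def by (simp add: image_comp)

lemma lift_cong: "(\<And>e x. e \<in> X \<Longrightarrow> x \<in> e \<Longrightarrow> g x = f x) \<Longrightarrow> lift g X = lift f X"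
  unfolding lift_def by (metis (no_types, lifting) image_cong)

lemma lift_edge:
  "is_matching m X \<Longrightarrow> e \<in> lift h X \<Longrightarrow> \<exists>a b. e = {h a, h b} \<and> a \<noteq> b \<and> a < m \<and> b < m \<and> {a, b} \<in> X"
  unfolding lift_def using matching_edge by fastforce

lemma lift_edge_subset: "is_matching m X \<Longrightarrow> e \<in> lift h X \<Longrightarrow> e \<subseteq> h ` {..<m}"
  unfolding lift_def using matching_edge_subset by blast

lemma lift_edge_points:
  assumes h: "crossing_embedding m n h" and X: "is_matching m X" and e: "e \<in> lift h X"
  shows "\<exists>a b. e = {a, b} \<and> a \<noteq> b \<and> a < n \<and> b < n"
proof -
  obtain a b where ab: "e = {h a, h b}" "a \<noteq> b" "a < m" "b < m" using lift_edge[OF X e] by blast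
  have "h a \<noteq> h b" using h ab unfolding crossing_embedding_def by (metis inj_onD lessThan_iff)
  moreover have "h a < n" "h b < n" using h ab unfolding crossing_embedding_def by auto
  ultimately show ?thesis using ab(1) by blast
qed

lemma compatible_lift:
  assumes h: "crossing_embedding m n h" and X: "is_matching m X" and Y: "is_matching m Y"
    and XY: "compatible X Y"
  shows "compatible (lift h X) (lift h Y)"
  unfolding compatible_def
proof (intro ballI)
  fix e f assume e: "e \<in> lift h X" and f: "f \<in> lift h Y"
  obtain a b where ab: "e = {h a, h b}" "a < m" "b < m" "{a, b} \<in> X"
    using lift_edge[OF X e] by blast
  obtain c d where cd: "f = {h c, h d}" "c < m" "d < m" "{c, d} \<in> Y"
    using lift_edge[OF Y f] by blast
  have "\<not> crosses {a, b} {c, d}" using XY ab(4) cd(4) unfolding compatible_def by blast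
  then show "\<not> crosses e f"
    using crossing_embedding_crosses[OF h ab(2,3) cd(2,3)] ab(1) cd(1) by simp
qed

lemma lift_disjoint:
  assumes h: "inj_on h {..<m}" and X: "is_matching m X" and Y: "is_matching m Y"
    and XY: "X \<inter> Y = {}"
  shows "lift h X \<inter> lift h Y = {}"
proof (rule ccontr)
  assume "lift h X \<inter> lift h Y \<noteq> {}"
  then obtain e1 e2 where e: "e1 \<in> X" "e2 \<in> Y" "h ` e1 = h ` e2"
    unfolding lift_def by blast
  have "e1 = e2"
    using inj_on_image_eq_iff[OF h matching_edge_subset[OF X e(1)] matching_edge_subset[OF Y e(2)]] e(3)
    by simp
  then show False using XY e by blast
qed

lemma lift_cover_image:
  assumes h: "inj_on h {..<m}" and X: "is_matching m X" and a: "a < m"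
  shows "\<exists>!e. e \<in> lift h X \<and> h a \<in> e"
proof -
  obtain e0 where e0: "e0 \<in> X" "a \<in> e0" and unique: "\<And>e. e \<in> X \<Longrightarrow> a \<in> e \<Longrightarrow> e = e0"
    using matching_cover[OF X a] by blast
  show ?thesis
  proof (rule ex1I[of _ "h ` e0"])
    show "h ` e0 \<in> lift h X \<and> h a \<in> h ` e0" using e0 unfolding lift_def by blast
  next
    fix e assume e: "e \<in> lift h X \<and> h a \<in> e"
    then obtain e1 a' where e1: "e1 \<in> X" "e = h ` e1" "a' \<in> e1" "h a' = h a"
      unfolding lift_def by auto
    have "a' < m" using matching_edge_subset[OF X e1(1)] e1(3) by auto
    then have "a' = a" using inj_onD[OF h e1(4)] a by simp
    then show "e = h ` e0" using unique e1 by blast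
  qed
qed

(* A free matching T for h completes the embedded points: it is a non-crossing perfect matching
   of the points outside the image of h, none of whose edges crosses a chord between image points. *)
definition free_matching :: "nat \<Rightarrow> nat \<Rightarrow> (nat \<Rightarrow> nat) \<Rightarrow> nat set set \<Rightarrow> bool" where
  "free_matching m n h T \<longleftrightarrow>
     (\<forall>e\<in>T. \<exists>a b. e = {a, b} \<and> a \<noteq> b \<and> a < n \<and> b < n) \<and>
     (\<forall>e\<in>T. e \<inter> h ` {..<m} = {}) \<and>
     (\<forall>x<n. x \<notin> h ` {..<m} \<longrightarrow> (\<exists>!e. e \<in> T \<and> x \<in> e)) \<and>
     compatible T T \<and>
     (\<forall>a<m. \<forall>b<m. compatible T {{h a, h b}})"

lemma free_edge: "free_matching m n h T \<Longrightarrow> e \<in> T \<Longrightarrow> \<exists>a b. e = {a, b} \<and> a \<noteq> b \<and> a < n \<and> b < n"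
  unfolding free_matching_def by simp

lemma free_edge_outside: "free_matching m n h T \<Longrightarrow> e \<in> T \<Longrightarrow> e \<inter> h ` {..<m} = {}"
  unfolding free_matching_def by simp

lemma free_cover:
  "free_matching m n h T \<Longrightarrow> x < n \<Longrightarrow> x \<notin> h ` {..<m} \<Longrightarrow> \<exists>!e. e \<in> T \<and> x \<in> e"
  unfolding free_matching_def by simp

lemma free_compatible_self: "free_matching m n h T \<Longrightarrow> compatible T T"
  unfolding free_matching_def by simp

lemma compatible_free_lift:
  assumes T: "free_matching m n h T" and X: "is_matching m X"
  shows "compatible T (lift h X)"
  unfolding compatible_def
proof (intro ballI)
  fix e f assume e: "e \<in> T" and f: "f \<in> lift h X"
  obtain a b where f_ab: "f = {h a, h b}" "a < m" "b < m" using lift_edge[OF X f] by blast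
  have "compatible T {{h a, h b}}" using T f_ab(2,3) unfolding free_matching_def by simp
  then show "\<not> crosses e f" using e f_ab(1) unfolding compatible_def by blast
qed

lemma lift_free_disjoint:
  assumes T: "free_matching m n h T" and X: "is_matching m X"
  shows "lift h X \<inter> T = {}"
proof -
  have "e \<notin> T" if e: "e \<in> lift h X" for e
  proof
    assume eT: "e \<in> T"
    obtain a b where "e = {a, b}" using free_edge[OF T eT] by blast
    then show False using lift_edge_subset[OF X e] free_edge_outside[OF T eT] by blast
  qed
  then show ?thesis by blast
qed

lemma lift_cover:
  assumes h: "crossing_embedding m n h" and T: "free_matching m n h T"
    and X: "is_matching m X" and x: "x < n"
  shows "\<exists>!e. e \<in> lift h X \<union> T \<and> x \<in> e"
proof (cases "x \<in> h ` {..<m}")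
  case True
  then obtain a where a: "a < m" "x = h a" by blast
  have inj: "inj_on h {..<m}" using h unfolding crossing_embedding_def by simp
  have "\<exists>!e. e \<in> lift h X \<and> x \<in> e" using lift_cover_image[OF inj X a(1)] a(2) by simp
  moreover have "x \<notin> e" if "e \<in> T" for e using free_edge_outside[OF T that] True by blast
  ultimately show ?thesis by blast
next
  case False
  have "\<exists>!e. e \<in> T \<and> x \<in> e" using free_cover[OF T x False] .
  moreover have "x \<notin> e" if "e \<in> lift h X" for e using lift_edge_subset[OF X that] False by blast
  ultimately show ?thesis by blast
qed

lemma lift_matching:
  assumes h: "crossing_embedding m n h" and T: "free_matching m n h T" and X: "is_matching m X"
  shows "is_matching n (lift h X \<union> T)"
proof -
  have "compatible (lift h X) (lift h X)"
    using compatible_lift[OF h X X] X by (simp add: is_matching_iff)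
  then show ?thesis
    unfolding is_matching_iff
    using lift_edge_points[OF h X] free_edge[OF T] lift_cover[OF h T X] free_compatible_self[OF T]
      compatible_free_lift[OF T X] compatible_sym[OF compatible_free_lift[OF T X]]
    by auto
qed

lemma lift_adjacent:
  assumes h: "crossing_embedding m n h" and T: "free_matching m n h T" and T': "free_matching m n h T'"
    and disj: "T \<inter> T' = {}" and comp: "compatible T T'" and adj: "dcm_adj m X Y"
  shows "dcm_adj n (lift h X \<union> T) (lift h Y \<union> T')"
proof -
  have X: "is_matching m X" and Y: "is_matching m Y" and XY: "X \<inter> Y = {}" "compatible X Y"
    using adj by (simp_all add: dcm_adj_iff)
  have inj: "inj_on h {..<m}" using h unfolding crossing_embedding_def by simp
  have "(lift h X \<union> T) \<inter> (lift h Y \<union> T') = {}"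
    using lift_disjoint[OF inj X Y XY(1)] disj lift_free_disjoint[OF T' X] lift_free_disjoint[OF T Y]
    by blast
  moreover have "compatible (lift h X \<union> T) (lift h Y \<union> T')"
    using compatible_lift[OF h X Y XY(2)] comp compatible_free_lift[OF T Y]
      compatible_sym[OF compatible_free_lift[OF T' X]] by simp
  ultimately show ?thesis
    using lift_matching[OF h T X] lift_matching[OF h T' Y] by (simp add: dcm_adj_iff)
qed

lemma lift_part:
  assumes T: "free_matching m n h T" and X: "is_matching m X"
  shows "lift h X = {e \<in> lift h X \<union> T. e \<subseteq> h ` {..<m}}"
proof -
  have "\<not> e \<subseteq> h ` {..<m}" if e: "e \<in> T" for e
  proof -
    obtain a b where "e = {a, b}" using free_edge[OF T e] by blast
    then show ?thesis using free_edge_outside[OF T e] by auto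
  qed
  moreover have "e \<subseteq> h ` {..<m}" if "e \<in> lift h X" for e using lift_edge_subset[OF X that] .
  ultimately show ?thesis by auto
qed

lemma lift_injective:
  assumes h: "crossing_embedding m n h" and T: "free_matching m n h T" and T': "free_matching m n h T'"
    and X: "is_matching m X" and Y: "is_matching m Y" and eq: "lift h X \<union> T = lift h Y \<union> T'"
  shows "X = Y"
proof -
  have inj: "inj_on h {..<m}" using h unfolding crossing_embedding_def by simp
  have "X \<subseteq> Pow {..<m}" "Y \<subseteq> Pow {..<m}"
    using matching_edge_subset[OF X] matching_edge_subset[OF Y] by auto
  moreover have "lift h X = lift h Y"
  proof -
    have "lift h X = {e \<in> lift h X \<union> T. e \<subseteq> h ` {..<m}}" by (rule lift_part[OF T X])
    also have "\<dots> = {e \<in> lift h Y \<union> T'. e \<subseteq> h ` {..<m}}" by (simp only: eq)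
    also have "\<dots> = lift h Y" by (rule lift_part[OF T' Y, symmetric])
    finally show ?thesis .
  qed
  ultimately show ?thesis using inj_on_image_eq_iff[OF inj_on_image_Pow[OF inj]] unfolding lift_def by simp
qed

lemma matching_split:
  assumes N: "is_matching n N" and K: "free_matching m n h K" "K \<subseteq> N"
  shows "N = {e \<in> N. e \<subseteq> h ` {..<m}} \<union> K"
proof -
  have "e \<in> K" if e: "e \<in> N" "\<not> e \<subseteq> h ` {..<m}" for e
  proof -
    obtain x where x: "x \<in> e" "x \<notin> h ` {..<m}" using e(2) by blast
    have "x < n" using matching_edge_subset[OF N e(1)] x(1) by blast
    then obtain e' where e': "e' \<in> K" "x \<in> e'" using free_cover[OF K(1) _ x(2)] by blast
    have "\<exists>!e. e \<in> N \<and> x \<in> e" using matching_cover[OF N \<open>x < n\<close>] .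
    then have "e' = e" using e' K(2) e(1) x(1) by blast
    then show "e \<in> K" using e' by simp
  qed
  then show ?thesis using K(2) by auto
qed

lemma component_matching: "is_matching n N \<Longrightarrow> X \<in> dcm_component n N \<Longrightarrow> is_matching n X"
  unfolding dcm_component_def by (auto elim: rtranclp.cases simp: dcm_adj_def)

lemma finite_component: "is_matching n N \<Longrightarrow> finite (dcm_component n N)"
  by (rule finite_subset[of _ "Pow (Pow {..<n})"])
    (use component_matching matching_edge_subset in blast, simp)

(* Walking through the component of M, the completions A and B alternate: every member of the
   component of M lands, completed by A or by B, in the component of N. *)
lemma lift_component:
  assumes h: "crossing_embedding m n h" and A: "free_matching m n h A" and B: "free_matching m n h B"
    and disj: "A \<inter> B = {}" and comp: "compatible A B"
    and N: "N = lift h M \<union> A \<or> N = lift h M \<union> B"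
    and X: "X \<in> dcm_component m M"
  shows "lift h X \<union> A \<in> dcm_component n N \<or> lift h X \<union> B \<in> dcm_component n N"
proof -
  have "(dcm_adj m)\<^sup>*\<^sup>* M X" using X unfolding dcm_component_def by simp
  then show ?thesis
  proof (induction rule: rtranclp_induct)
    case base
    then show ?case using N unfolding dcm_component_def by auto
  next
    case (step Y Z)
    have adj_AB: "dcm_adj n (lift h Y \<union> A) (lift h Z \<union> B)"
      by (rule lift_adjacent[OF h A B disj comp step.hyps(2)])
    have adj_BA: "dcm_adj n (lift h Y \<union> B) (lift h Z \<union> A)"
      by (rule lift_adjacent[OF h B A _ compatible_sym[OF comp] step.hyps(2)]) (use disj in blast)
    from step.IH show ?case
      unfolding dcm_component_def mem_Collect_eq
      using rtranclp.rtrancl_into_rtrancl[of "dcm_adj n" N, OF _ adj_AB]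
        rtranclp.rtrancl_into_rtrancl[of "dcm_adj n" N, OF _ adj_BA]
      by blast
  qed
qed

lemma component_card_le:
  assumes h: "crossing_embedding m n h" and A: "free_matching m n h A" and B: "free_matching m n h B"
    and disj: "A \<inter> B = {}" and comp: "compatible A B"
    and M: "is_matching m M" and N: "N = lift h M \<union> A \<or> N = lift h M \<union> B"
  shows "card (dcm_component m M) \<le> card (dcm_component n N)"
proof -
  define f where
    "f X = (if lift h X \<union> A \<in> dcm_component n N then lift h X \<union> A else lift h X \<union> B)" for X
  have into: "f ` dcm_component m M \<subseteq> dcm_component n N"
    using lift_component[OF h A B disj comp N] unfolding f_def by auto
  have shape: "\<exists>T. free_matching m n h T \<and> f X = lift h X \<union> T" for X
    unfolding f_def using A B by auto
  have "inj_on f (dcm_component m M)"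
  proof (rule inj_onI)
    fix X Y assume X: "X \<in> dcm_component m M" and Y: "Y \<in> dcm_component m M" and eq: "f X = f Y"
    obtain T where T: "free_matching m n h T" "f X = lift h X \<union> T" using shape by blast
    obtain T' where T': "free_matching m n h T'" "f Y = lift h Y \<union> T'" using shape by blast
    show "X = Y"
      using lift_injective[OF h T(1) T'(1) component_matching[OF M X] component_matching[OF M Y]]
        eq T(2) T'(2) by simp
  qed
  moreover have "is_matching n N" using N lift_matching[OF h A M] lift_matching[OF h B M] by blast
  ultimately show ?thesis using card_inj_on_le[OF _ into finite_component] by blast
qed

(* For a separated pair on the points i..i+3 (mod m + 4): undo the relabelling by r, shift past
   the four removed points and rotate to start at i.  This realises N - K inside N. *)
definition sep_embedding :: "nat \<Rightarrow> nat \<Rightarrow> nat \<Rightarrow> nat \<Rightarrow> nat" where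
  "sep_embedding m i r = rot (m + 4) i \<circ> (\<lambda>a. a + 4) \<circ> rot m (m - r mod m)"

lemma crossing_embedding_sep: "crossing_embedding m (m + 4) (sep_embedding m i r)"
  unfolding sep_embedding_def
  using crossing_embedding_comp[OF crossing_embedding_comp[OF crossing_embedding_rot crossing_embedding_shift]
      crossing_embedding_rot]
  by (simp add: comp_assoc)

lemma sep_embedding_image: "sep_embedding m i r ` {..<m} = rot (m + 4) i ` {4..<m + 4}"
proof -
  have "(\<lambda>a. a + 4) ` {..<m} = {4..<m + 4}"
    using image_add_atLeastLessThan'[of 4 0 m] by (simp add: atLeast0LessThan)
  then show ?thesis unfolding sep_embedding_def image_comp[symmetric] rot_image by simp
qed

lemma sep_embedding_rot: "j < m \<Longrightarrow> sep_embedding m i r (rot m r j) = rot (m + 4) i (j + 4)"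
  unfolding sep_embedding_def by (simp add: rot_inverse(1))

definition block4 :: "nat set set" where "block4 = {{0, 3}, {1, 2}}"

definition antiblock4 :: "nat set set" where "antiblock4 = {{0, 1}, {2, 3}}"

lemma block_at_lift: "block_at n i = lift (rot n i) block4"
  unfolding block_at_def block4_def lift_def rot_def by (simp add: add.commute)

lemma antiblock_at_lift: "antiblock_at n i = lift (rot n i) antiblock4"
  unfolding antiblock_at_def antiblock4_def lift_def rot_def by (simp add: add.commute)

lemma matching_block4: "is_matching 4 block4"
  unfolding block4_def by (rule matching_of_two_edges) (auto simp: interleaved_def)

lemma matching_antiblock4: "is_matching 4 antiblock4"
  unfolding antiblock4_def by (rule matching_of_two_edges) (auto simp: interleaved_def)

lemma adjacent_block4_antiblock4: "dcm_adj 4 block4 antiblock4"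
  unfolding dcm_adj_iff compatible_def using matching_block4 matching_antiblock4
  unfolding block4_def antiblock4_def by (auto simp: crosses_iff_interleaved interleaved_def doubleton_eq_iff)

lemma rot_low_high_disjoint:
  assumes "4 \<le> n" shows "rot n i ` {..<4} \<inter> rot n i ` {4..<n} = {}"
proof -
  have "rot n i ` ({..<4} \<inter> {4..<n}) = rot n i ` {..<4} \<inter> rot n i ` {4..<n}"
    by (rule inj_on_image_Int[OF inj_on_rot]) (use assms in auto)
  moreover have "{..<4} \<inter> {4..<n} = {}" by auto
  ultimately show ?thesis by simp
qed

lemma rot_low_high_not_crosses:
  assumes "p < 4" "q < 4" "4 \<le> c" "4 \<le> d" "c < n" "d < n"
  shows "\<not> crosses {rot n i p, rot n i q} {rot n i c, rot n i d}"
proof -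
  have "p < n" "q < n" using assms by auto
  then show ?thesis using crosses_rot[of p n q c d i] interleaved_apart assms by simp
qed

lemma free_lifted_pair:
  assumes P: "is_matching 4 P"
  shows "free_matching m (m + 4) (sep_embedding m i r) (lift (rot (m + 4) i) P)"
proof -
  let ?n = "m + 4" and ?\<rho> = "rot (m + 4) i" and ?h = "sep_embedding m i r"
  have \<rho>4: "crossing_embedding 4 ?n ?\<rho>" by (rule crossing_embedding_mono[OF crossing_embedding_rot]) simp
  have inj4: "inj_on ?\<rho> {..<4}" using \<rho>4 unfolding crossing_embedding_def by simp
  have image: "?h ` {..<m} = ?\<rho> ` {4..<?n}" by (rule sep_embedding_image)
  have outside: "\<forall>e\<in>lift ?\<rho> P. e \<inter> ?h ` {..<m} = {}"
  proof
    fix e assume "e \<in> lift ?\<rho> P"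
    then have "e \<subseteq> ?\<rho> ` {..<4}" by (rule lift_edge_subset[OF P])
    then show "e \<inter> ?h ` {..<m} = {}" unfolding image using rot_low_high_disjoint[OF le_add2] by blast
  qed
  have cover: "\<forall>x<?n. x \<notin> ?h ` {..<m} \<longrightarrow> (\<exists>!e. e \<in> lift ?\<rho> P \<and> x \<in> e)"
  proof (intro allI impI)
    fix x assume x: "x < ?n" "x \<notin> ?h ` {..<m}"
    have "x \<in> ?\<rho> ` {..<?n}" unfolding rot_image using x(1) by simp
    then have "x \<in> ?\<rho> ` {..<4}"
      unfolding rot_image_split[of ?n i, OF le_add2] using x(2) unfolding image by blast
    then obtain a where "a < 4" "x = ?\<rho> a" by blast
    then show "\<exists>!e. e \<in> lift ?\<rho> P \<and> x \<in> e" using lift_cover_image[OF inj4 P] by simp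
  qed
  have apart_edges: "\<forall>a<m. \<forall>b<m. compatible (lift ?\<rho> P) {{?h a, ?h b}}"
    unfolding compatible_def
  proof (intro allI impI ballI)
    fix a b e f assume ab: "a < m" "b < m" and e: "e \<in> lift ?\<rho> P" and f: "f \<in> {{?h a, ?h b}}"
    obtain p q where pq: "e = {?\<rho> p, ?\<rho> q}" "p < 4" "q < 4" using lift_edge[OF P e] by blast
    have "?h a \<in> ?\<rho> ` {4..<?n}" "?h b \<in> ?\<rho> ` {4..<?n}" unfolding image[symmetric] using ab by simp_all
    then obtain c d where cd: "?h a = ?\<rho> c" "?h b = ?\<rho> d" "4 \<le> c" "4 \<le> d" "c < ?n" "d < ?n"
      by auto
    then show "\<not> crosses e f" using f pq rot_low_high_not_crosses by simp
  qed
  have "compatible (lift ?\<rho> P) (lift ?\<rho> P)"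
    using compatible_lift[OF \<rho>4 P P] P by (simp add: is_matching_iff)
  then show ?thesis
    unfolding free_matching_def using lift_edge_points[OF \<rho>4 P] outside cover apart_edges by blast
qed

lemma lifted_pairs_adjacent:
  "lift (rot (m + 4) i) block4 \<inter> lift (rot (m + 4) i) antiblock4 = {} \<and>
   compatible (lift (rot (m + 4) i) block4) (lift (rot (m + 4) i) antiblock4)"
proof -
  have \<rho>4: "crossing_embedding 4 (m + 4) (rot (m + 4) i)"
    by (rule crossing_embedding_mono[OF crossing_embedding_rot]) simp
  then have inj4: "inj_on (rot (m + 4) i) {..<4}" unfolding crossing_embedding_def by simp
  have "block4 \<inter> antiblock4 = {}" "compatible block4 antiblock4"
    using adjacent_block4_antiblock4 unfolding dcm_adj_iff by simp_all
  then show ?thesis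
    using lift_disjoint[OF inj4 matching_block4 matching_antiblock4]
      compatible_lift[OF \<rho>4 matching_block4 matching_antiblock4] by simp
qed

lemma rotate_matching_lift: "rotate_matching m r X = lift (rot m r) X"
  unfolding rotate_matching_def lift_def rot_def ..

lemma remove_at_shifted:
  "remove_at (m + 4) N i =
     {{j, l} | j l. j < m \<and> l < m \<and> {rot (m + 4) i (j + 4), rot (m + 4) i (l + 4)} \<in> N}"
  unfolding remove_at_def rot_def by (simp add: add.commute add.left_commute)

lemma lift_remove_at:
  assumes N: "is_matching (m + 4) N"
  shows "lift (\<lambda>j. rot (m + 4) i (j + 4)) (remove_at (m + 4) N i) =
           {e \<in> N. e \<subseteq> rot (m + 4) i ` {4..<m + 4}}"
    (is "lift ?g ?R = ?E")
proof
  have g_image: "?g j \<in> rot (m + 4) i ` {4..<m + 4}" if "j < m" for j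
    using that by (intro imageI) simp
  show "lift ?g ?R \<subseteq> ?E"
  proof
    fix e assume "e \<in> lift ?g ?R"
    then obtain e0 where e0: "e0 \<in> ?R" "e = ?g ` e0" unfolding lift_def by blast
    then obtain j l where jl: "j < m" "l < m" "{?g j, ?g l} \<in> N" "e0 = {j, l}"
      unfolding remove_at_shifted by blast
    then show "e \<in> ?E" using e0(2) g_image by simp
  qed
  show "?E \<subseteq> lift ?g ?R"
  proof
    fix e assume e: "e \<in> ?E"
    then have eN: "e \<in> N" and e_image: "e \<subseteq> rot (m + 4) i ` {4..<m + 4}" by simp_all
    obtain x y where xy: "e = {x, y}" using matching_edge[OF N eN] by blast
    have preimage: "\<exists>j<m. ?g j = z" if z: "z \<in> e" for z
    proof -
      obtain c where "z = rot (m + 4) i c" "4 \<le> c" "c < m + 4" using e_image z by auto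
      then show ?thesis by (intro exI[of _ "c - 4"]) simp
    qed
    obtain j where j: "j < m" "?g j = x" using preimage xy by blast
    obtain l where l: "l < m" "?g l = y" using preimage xy by blast
    have "{?g j, ?g l} \<in> N" using eN xy j l by simp
    then have "{j, l} \<in> ?R" unfolding remove_at_shifted using j(1) l(1) by blast
    moreover have "e = ?g ` {j, l}" using j l xy by simp
    ultimately show "e \<in> lift ?g ?R" unfolding lift_def by blast
  qed
qed

lemma separated_pair_split:
  assumes N: "is_matching (m + 4) N" and P: "is_matching 4 P" and K: "lift (rot (m + 4) i) P \<subseteq> N"
    and M: "rotate_matching m r (remove_at (m + 4) N i) = M"
  shows "N = lift (sep_embedding m i r) M \<union> lift (rot (m + 4) i) P"
proof -
  let ?h = "sep_embedding m i r" and ?R = "remove_at (m + 4) N i"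
  have "lift ?h M = lift (?h \<circ> rot m r) ?R"
    using M unfolding rotate_matching_lift lift_comp[symmetric] by simp
  also have "\<dots> = lift (\<lambda>j. rot (m + 4) i (j + 4)) ?R"
  proof (rule lift_cong)
    fix e x assume "e \<in> ?R" "x \<in> e"
    then have "x < m" unfolding remove_at_shifted by auto
    then show "(?h \<circ> rot m r) x = rot (m + 4) i (x + 4)" by (simp add: sep_embedding_rot)
  qed
  also have "\<dots> = {e \<in> N. e \<subseteq> ?h ` {..<m}}"
    unfolding sep_embedding_image by (rule lift_remove_at[OF N])
  finally have lifted: "lift ?h M = {e \<in> N. e \<subseteq> ?h ` {..<m}}" .
  show ?thesis unfolding lifted by (rule matching_split[OF N free_lifted_pair[OF P] K])
qed

theorem mainTheorem9:
  fixes k :: nat and M N :: "nat set set" and i :: nat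
  assumes "k \<ge> 1"
    and "is_matching (2 * k) M"
    and "is_matching (2 * k + 4) N"
    and "i < 2 * k + 4"
    and "block_at (2 * k + 4) i \<subseteq> N \<or> antiblock_at (2 * k + 4) i \<subseteq> N"
    and "\<exists>r. rotate_matching (2 * k) r (remove_at (2 * k + 4) N i) = M"
  shows "card (dcm_component (2 * k) M) \<le> card (dcm_component (2 * k + 4) N)"
proof -
  obtain r where r: "rotate_matching (2 * k) r (remove_at (2 * k + 4) N i) = M" using assms(6) by blast
  let ?h = "sep_embedding (2 * k) i r" and ?\<rho> = "rot (2 * k + 4) i"
  have split: "N = lift ?h M \<union> lift ?\<rho> block4 \<or> N = lift ?h M \<union> lift ?\<rho> antiblock4"
    using assms(5) separated_pair_split[OF assms(3) matching_block4 _ r]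
      separated_pair_split[OF assms(3) matching_antiblock4 _ r]
    unfolding block_at_lift antiblock_at_lift by blast
  have adj: "lift ?\<rho> block4 \<inter> lift ?\<rho> antiblock4 = {}" "compatible (lift ?\<rho> block4) (lift ?\<rho> antiblock4)"
    using lifted_pairs_adjacent by simp_all
  show ?thesis
    by (rule component_card_le[OF crossing_embedding_sep free_lifted_pair[OF matching_block4]
          free_lifted_pair[OF matching_antiblock4] adj assms(2) split])
qed

end
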